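(* Let $\mathcal{C}=\mathsf{CSS}(A,B)$ and let $U$ be a 1-local Clifford circuit. If $U$ is a logical operator on $\mathcal{C}$, then it is equivalent to some depth-1 circuit $V$ with gates from $\{I,P,HP,PH,PHP,H\}$ such that for all $a\in A$ and all $b\in B$: $a\cap V_{P,HP,PH,H}\in B$, $a\cap V_{PH,H}\in A$, $b\cap V_{HP,PHP,PH,H}\in A$, and $b\cap V_{HP,H}\in B$.
   Context: $\mathsf{CSS}(A,B)$ is the CSS code on $n$ qubits built from classical codes $A,B\subseteq\mathbb{F}_2^n$ with $B\subseteq A^\perp$, whose stabilizer group is generated by the $X$-stabilizers $X^a$ ($a\in A$) and the $Z$-stabilizers $Z^b$ ($b\in B$); here for $a\in\mathbb{F}_2^n$ and a single-qubit gate $G$, $G^a=\bigotimes_{i:a_i=1}G_i$. A logical operator is any operator preserving the codespace. A 1-local Clifford circuit is a tensor product of single-qubit Clifford gates. "Equivalent" means: every 1-local Clifford circuit $U$ can be written as $U=VQ$ where $Q$ is a Pauli circuit and $V$ is a depth-1 circuit with each single-qubit gate in $\{I,P,HP,PHP,PH,H\}$ ($P$ the phase gate, $H$ the Hadamard); $U$ is a logical operator with logical action $\bar U$ iff $V$ is (up to phase) a logical operator with the same action up to phase. For a set $K$ of these single-qubit gates, $V_K=\{i : V_i\in K\}$ (the set of physical qubits on which $V$ applies a gate from $K$). For $a\in\mathbb{F}_2^n$ and $h\subseteq\{1,\dots,n\}$, $a\cap h$ denotes the vector with $(a\cap h)_i=1$ iff $a_i=1$ and $i\in h$. Up to phase,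 the gates act by conjugation as: $I: X\mapsto X, Z\mapsto Z$; $P: X\mapsto XZ, Z\mapsto Z$; $HP: X\mapsto XZ, Z\mapsto X$; $PH: X\mapsto Z, Z\mapsto XZ$; $PHP: X\mapsto X, Z\mapsto XZ$; $H: X\mapsto Z, Z\mapsto X$. *)

theory Defs
  imports Complex_Main
begin

text \<open>Qubits are indexed by a finite type 'n (so n = CARD('n)).
  Computational basis states of n qubits are bit strings 'n => bool;
  an n-qubit operator is a complex matrix indexed by bit strings
  (row, column). A single-qubit operator is a 2x2 complex matrix
  indexed by bool (False = |0>, True = |1>).\<close>

type_synonym gate1 = "bool \<Rightarrow> bool \<Rightarrow> complex"
type_synonym 'n qop = "('n \<Rightarrow> bool) \<Rightarrow> ('n \<Rightarrow> bool) \<Rightarrow> complex"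
type_synonym 'n qstate = "('n \<Rightarrow> bool) \<Rightarrow> complex"

definition gmult :: "gate1 \<Rightarrow> gate1 \<Rightarrow> gate1" where
  "gmult g h = (\<lambda>r c. \<Sum>k\<in>UNIV. g r k * h k c)"

definition gadj :: "gate1 \<Rightarrow> gate1" where
  "gadj g = (\<lambda>r c. cnj (g c r))"

definition gscale :: "complex \<Rightarrow> gate1 \<Rightarrow> gate1" where
  "gscale s g = (\<lambda>r c. s * g r c)"

definition pI :: gate1 where "pI = (\<lambda>r c. if r = c then 1 else 0)"
definition pX :: gate1 where "pX = (\<lambda>r c. if r \<noteq> c then 1 else 0)"
definition pY :: gate1 where
  "pY = (\<lambda>r c. if r = c then 0 else if r then \<i> else - \<i>)"
definition pZ :: gate1 where
  "pZ = (\<lambda>r c. if r = c then (if r then -1 else 1) else 0)"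

definition gP :: gate1 where
  "gP = (\<lambda>r c. if r = c then (if r then \<i> else 1) else 0)"
definition gH :: gate1 where
  "gH = (\<lambda>r c. complex_of_real (1 / sqrt 2) * (if r \<and> c then -1 else 1))"

definition unitary1 :: "gate1 \<Rightarrow> bool" where
  "unitary1 g \<longleftrightarrow> gmult g (gadj g) = pI \<and> gmult (gadj g) g = pI"

definition pauli_up_to_phase :: "gate1 \<Rightarrow> bool" where
  "pauli_up_to_phase M \<longleftrightarrow> (\<exists>s p. s \<noteq> 0 \<and> p \<in> {pI, pX, pY, pZ} \<and> M = gscale s p)"

definition clifford1 :: "gate1 \<Rightarrow> bool" where
  "clifford1 g \<longleftrightarrow> unitary1 g
     \<and> pauli_up_to_phase (gmult (gmult g pX) (gadj g))
     \<and> pauli_up_to_phase (gmult (gmult g pZ) (gadj g))"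

definition tensor :: "('n::finite \<Rightarrow> gate1) \<Rightarrow> 'n qop" where
  "tensor g = (\<lambda>x y. \<Prod>i\<in>UNIV. g i (x i) (y i))"

definition opmult :: "'n::finite qop \<Rightarrow> 'n qop \<Rightarrow> 'n qop" where
  "opmult M N = (\<lambda>x y. \<Sum>z\<in>UNIV. M x z * N z y)"

definition apply_op :: "'n::finite qop \<Rightarrow> 'n qstate \<Rightarrow> 'n qstate" where
  "apply_op M \<psi> = (\<lambda>x. \<Sum>y\<in>UNIV. M x y * \<psi> y)"

definition one_local_clifford :: "'n::finite qop \<Rightarrow> bool" where
  "one_local_clifford U \<longleftrightarrow> (\<exists>g. (\<forall>i. clifford1 (g i)) \<and> U = tensor g)"

definition pauli_circuit :: "'n::finite qop \<Rightarrow> bool" where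
  "pauli_circuit Q \<longleftrightarrow> (\<exists>p. (\<forall>i. p i \<in> {pI, pX, pY, pZ}) \<and> Q = tensor p)"

definition pow_gate :: "gate1 \<Rightarrow> ('n::finite \<Rightarrow> bool) \<Rightarrow> 'n qop" where
  "pow_gate G a = tensor (\<lambda>i. if a i then G else pI)"

text \<open>Classical binary linear codes in F_2^n (vectors are 'n => bool, addition is xor).\<close>
definition lin_code :: "('n \<Rightarrow> bool) set \<Rightarrow> bool" where
  "lin_code A \<longleftrightarrow> (\<lambda>_. False) \<in> A \<and> (\<forall>a\<in>A. \<forall>b\<in>A. (\<lambda>i. a i \<noteq> b i) \<in> A)"

definition dual_code :: "('n::finite \<Rightarrow> bool) set \<Rightarrow> ('n \<Rightarrow> bool) set" where
  "dual_code A = {b. \<forall>a\<in>A. even (card {i. a i \<and> b i})}"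

definition css_codespace :: "('n::finite \<Rightarrow> bool) set \<Rightarrow> ('n \<Rightarrow> bool) set \<Rightarrow> 'n qstate set" where
  "css_codespace A B = {\<psi>. (\<forall>a\<in>A. apply_op (pow_gate pX a) \<psi> = \<psi>)
                        \<and> (\<forall>b\<in>B. apply_op (pow_gate pZ b) \<psi> = \<psi>)}"

definition logical_op :: "'n::finite qstate set \<Rightarrow> 'n qop \<Rightarrow> bool" where
  "logical_op C U \<longleftrightarrow> (\<forall>\<psi>\<in>C. apply_op U \<psi> \<in> C)"

datatype gate = GI | GP | GHP | GPHP | GPH | GH

fun gate_mat :: "gate \<Rightarrow> gate1" where
  "gate_mat GI = pI"
| "gate_mat GP = gP"
| "gate_mat GHP = gmult gH gP"
| "gate_mat GPHP = gmult gP (gmult gH gP)"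
| "gate_mat GPH = gmult gP gH"
| "gate_mat GH = gH"

definition gate_circuit :: "('n::finite \<Rightarrow> gate) \<Rightarrow> 'n qop" where
  "gate_circuit V = tensor (\<lambda>i. gate_mat (V i))"

definition Vset :: "('n \<Rightarrow> gate) \<Rightarrow> gate set \<Rightarrow> 'n set" where
  "Vset V K = {i. V i \<in> K}"

definition cap :: "('n \<Rightarrow> bool) \<Rightarrow> 'n set \<Rightarrow> ('n \<Rightarrow> bool)" where
  "cap a h = (\<lambda>i. a i \<and> i \<in> h)"

end

(*
  A single-qubit Clifford g is determined up to phase by the Paulis g X g^-1 and g Z g^-1, and
  the six gates I, P, HP, PHP, PH, H realise each admissible pair of images exactly once. Hence
  every factor of U is, up to phase, one of these gates followed by a Pauli, and conjugating the
  stabilizers by U gives, up to phase,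
    U X^a U^-1 ~ X^(a \<inter> V_{I,P,HP,PHP}) Z^(a \<inter> V_{P,HP,PH,H}),
    U Z^b U^-1 ~ X^(b \<inter> V_{HP,PHP,PH,H}) Z^(b \<inter> V_{I,P,PH,PHP}).
  The 12th power of every single-qubit Clifford is a scalar, so U maps the codespace onto itself
  and these conjugates again fix every codeword. A Pauli X^x Z^z fixing the codespace up to a
  phase has x in A and z in B: evaluate it on the coset states |y + A>, y in B^perp, and use
  (B^perp)^perp = B. The stated conditions follow since A and B are closed under addition.
*)

theory Submission
  imports Defs "HOL-Library.FuncSet" "HOL-Library.Disjoint_Sets"
begin

section \<open>Single-qubit operators as 2x2 matrices\<close>

definition mat2 :: "complex \<Rightarrow> complex \<Rightarrow> complex \<Rightarrow> complex \<Rightarrow> gate1" where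
  "mat2 a b c d = (\<lambda>r s. if r then (if s then d else c) else (if s then b else a))"

lemma mat2_eta: "g = mat2 (g False False) (g False True) (g True False) (g True True)"
  unfolding mat2_def by (simp add: fun_eq_iff)

lemma mat2_apply [simp]:
  "mat2 a b c d False False = a" "mat2 a b c d False True = b"
  "mat2 a b c d True False = c" "mat2 a b c d True True = d"
  by (simp_all add: mat2_def)

lemma mat2_eq_iff [simp]: "mat2 a b c d = mat2 a' b' c' d' \<longleftrightarrow> a = a' \<and> b = b' \<and> c = c' \<and> d = d'"
  unfolding mat2_def by (auto simp: fun_eq_iff)

lemma sum_UNIV_bool: "(\<Sum>k\<in>(UNIV::bool set). f k) = f False + f True"
  by (simp add: UNIV_bool)

lemma gmult_mat2 [simp]:
  "gmult (mat2 a b c d) (mat2 a' b' c' d') =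
     mat2 (a*a' + b*c') (a*b' + b*d') (c*a' + d*c') (c*b' + d*d')"
  unfolding gmult_def mat2_def by (auto simp: sum_UNIV_bool fun_eq_iff)

lemma gadj_mat2 [simp]: "gadj (mat2 a b c d) = mat2 (cnj a) (cnj c) (cnj b) (cnj d)"
  unfolding gadj_def mat2_def by (auto simp: fun_eq_iff)

lemma gscale_mat2 [simp]: "gscale s (mat2 a b c d) = mat2 (s*a) (s*b) (s*c) (s*d)"
  unfolding gscale_def mat2_def by (auto simp: fun_eq_iff)

definition inv_sqrt2 :: complex where "inv_sqrt2 = complex_of_real (1 / sqrt 2)"

lemma inv_sqrt2_square: "inv_sqrt2 * inv_sqrt2 = 1/2"
  unfolding inv_sqrt2_def by (simp flip: of_real_mult)

lemma inv_sqrt2_nonzero [simp]: "inv_sqrt2 \<noteq> 0"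
  by (simp add: inv_sqrt2_def)

lemma cnj_inv_sqrt2 [simp]: "cnj inv_sqrt2 = inv_sqrt2"
  unfolding inv_sqrt2_def by simp

lemma pI_mat2: "pI = mat2 1 0 0 1"
  and pX_mat2: "pX = mat2 0 1 1 0"
  and pY_mat2: "pY = mat2 0 (-\<i>) \<i> 0"
  and pZ_mat2: "pZ = mat2 1 0 0 (-1)"
  and gP_mat2: "gP = mat2 1 0 0 \<i>"
  and gH_mat2: "gH = mat2 inv_sqrt2 inv_sqrt2 inv_sqrt2 (-inv_sqrt2)"
  unfolding pI_def pX_def pY_def pZ_def gP_def gH_def inv_sqrt2_def mat2_def
  by (auto simp: fun_eq_iff)

lemmas gate1_mat2 = pI_mat2 pX_mat2 pY_mat2 pZ_mat2 gP_mat2 gH_mat2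

lemma gmult_assoc: "gmult (gmult f g) h = gmult f (gmult g h)"
  unfolding gmult_def by (simp add: sum_UNIV_bool algebra_simps)

lemma gmult_pI_left [simp]: "gmult pI g = g"
  and gmult_pI_right [simp]: "gmult g pI = g"
  unfolding gmult_def pI_def by (simp_all add: sum_UNIV_bool fun_eq_iff)

lemma gmult_gscale_left: "gmult (gscale c f) g = gscale c (gmult f g)"
  and gmult_gscale_right: "gmult f (gscale c g) = gscale c (gmult f g)"
  unfolding gmult_def gscale_def by (simp_all add: sum_UNIV_bool algebra_simps)

lemma gscale_gscale: "gscale c (gscale d g) = gscale (c * d) g"
  unfolding gscale_def by (simp add: algebra_simps)

lemma gscale_1 [simp]: "gscale 1 g = g"
  unfolding gscale_def by simp

lemma gscale_apply: "gscale s g r c = s * g r c"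
  by (simp add: gscale_def)

lemma gadj_gscale: "gadj (gscale c g) = gscale (cnj c) (gadj g)"
  unfolding gadj_def gscale_def by simp

lemma gadj_gmult: "gadj (gmult f g) = gmult (gadj g) (gadj f)"
  unfolding gadj_def gmult_def by (simp add: sum_UNIV_bool algebra_simps)

lemma gate_mat_unitary: "unitary1 (gate_mat v)"
  unfolding unitary1_def by (cases v) (simp_all add: gate1_mat2 algebra_simps inv_sqrt2_square)

lemma pauli_unitary: "q \<in> {pI, pX, pY, pZ} \<Longrightarrow> unitary1 q"
  unfolding unitary1_def by (auto simp: gate1_mat2)

lemma unitary1_gmult:
  assumes "unitary1 f" and "unitary1 g"
  shows "unitary1 (gmult f g)"
proof -
  have "gmult (gmult f g) (gadj (gmult f g)) = gmult f (gmult (gmult g (gadj g)) (gadj f))"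
    and "gmult (gadj (gmult f g)) (gmult f g) = gmult (gadj g) (gmult (gmult (gadj f) f) g)"
    by (simp_all add: gadj_gmult gmult_assoc)
  then show ?thesis
    using assms unfolding unitary1_def by simp
qed

lemma unitary1_gscale_imp_cmod:
  assumes "unitary1 g" and "unitary1 (gscale c g)"
  shows "cmod c = 1"
proof -
  have "gscale (c * cnj c) pI = gmult (gadj (gscale c g)) (gscale c g)"
    using assms(1) unfolding unitary1_def
    by (simp add: gadj_gscale gmult_gscale_left gmult_gscale_right gscale_gscale mult.commute)
  also have "\<dots> = pI"
    using assms(2) unfolding unitary1_def by simp
  finally have "c * cnj c = 1"
    by (simp add: pI_mat2)
  then have "(cmod c)\<^sup>2 = 1"
    by (metis complex_norm_square of_real_eq_1_iff)
  then show ?thesis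
    using norm_ge_zero[of c] by (auto simp: power2_eq_1_iff)
qed

section \<open>Single-qubit Clifford gates modulo Paulis and phases\<close>

definition conjugates_to :: "gate1 \<Rightarrow> gate1 \<Rightarrow> gate1 \<Rightarrow> bool" where
  "conjugates_to g P Q \<longleftrightarrow> (\<exists>k. k \<noteq> 0 \<and> gmult g P = gscale k (gmult Q g))"

lemma conjugates_to_pI [simp]: "conjugates_to g pI pI"
  unfolding conjugates_to_def by (intro exI[of _ 1]) simp

lemma conjugates_to_gmult:
  assumes "conjugates_to f Q R" and "conjugates_to g P Q"
  shows "conjugates_to (gmult f g) P R"
proof -
  obtain k l where "k \<noteq> 0" "gmult f Q = gscale k (gmult R f)"
    and "l \<noteq> 0" "gmult g P = gscale l (gmult Q g)"
    using assms unfolding conjugates_to_def by blast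
  have "gmult (gmult f g) P = gscale l (gmult (gmult f Q) g)"
    by (simp add: gmult_assoc \<open>gmult g P = _\<close> gmult_gscale_right)
  also have "\<dots> = gscale (l * k) (gmult R (gmult f g))"
    by (simp add: \<open>gmult f Q = _\<close> gmult_gscale_left gscale_gscale gmult_assoc)
  finally show ?thesis
    unfolding conjugates_to_def using \<open>k \<noteq> 0\<close> \<open>l \<noteq> 0\<close> by (auto intro!: exI[of _ "l * k"])
qed

lemma conjugates_to_gscale: "conjugates_to g P Q \<Longrightarrow> conjugates_to (gscale c g) P Q"
  unfolding conjugates_to_def
  by (auto simp: gmult_gscale_left gmult_gscale_right gscale_gscale mult.commute)

lemma conjugates_to_gadj:
  assumes "unitary1 g" and "conjugates_to g P Q"
  shows "conjugates_to (gadj g) Q P"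
proof -
  obtain k where "k \<noteq> 0" and k: "gmult g P = gscale k (gmult Q g)"
    using assms(2) unfolding conjugates_to_def by blast
  have "gmult (gadj g) Q = gmult (gadj g) (gmult (gmult Q g) (gadj g))"
    using assms(1) unfolding unitary1_def by (simp add: gmult_assoc)
  also have "\<dots> = gscale (1 / k) (gmult (gadj g) (gmult (gmult g P) (gadj g)))"
    using \<open>k \<noteq> 0\<close> by (simp add: k gmult_gscale_left gmult_gscale_right gscale_gscale)
  also have "\<dots> = gscale (1 / k) (gmult P (gadj g))"
    using assms(1) unfolding unitary1_def by (simp flip: gmult_assoc)
  finally show ?thesis
    unfolding conjugates_to_def using \<open>k \<noteq> 0\<close> by (intro exI[of _ "1 / k"]) simp
qed

lemma conjugates_to_same_image:
  assumes "unitary1 g" and "conjugates_to g P Q" and "conjugates_to g P' Q"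
  shows "\<exists>c. P' = gscale c P"
proof -
  obtain k k' where "k' \<noteq> 0"
    and k: "gmult (gadj g) Q = gscale k (gmult P (gadj g))"
    and k': "gmult (gadj g) Q = gscale k' (gmult P' (gadj g))"
    using assms conjugates_to_gadj unfolding conjugates_to_def by metis
  have right_cancel: "gmult (gmult M (gadj g)) g = M" for M
    using assms(1) unfolding unitary1_def by (simp add: gmult_assoc)
  have "gscale k P = gscale k' P'"
    using right_cancel[of P] right_cancel[of P'] k k'
    by (metis gmult_gscale_left)
  then have "P' = gscale (k / k') P"
    using \<open>k' \<noteq> 0\<close> by (simp add: gscale_def fun_eq_iff field_simps)
  then show ?thesis ..
qed

lemma eq_or_eq_neg_if_mutual_multiples:
  fixes u w k :: "'a::idom"
  assumes "u = k * w" and "w = k * u"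
  shows "u = w \<or> u = - w"
proof -
  have "u * u = k * w * u"
    using assms(1) by simp
  also have "\<dots> = w * w"
    using assms(2) by (simp add: mult.commute mult.left_commute)
  finally show ?thesis
    by (simp add: square_eq_iff)
qed

lemma pauli_if_conjugates_to_self:
  assumes "conjugates_to h pX pX" and "conjugates_to h pZ pZ"
  shows "\<exists>c q. q \<in> {pI, pX, pY, pZ} \<and> h = gscale c q"
proof -
  obtain a b c d where h: "h = mat2 a b c d"
    using mat2_eta by blast
  obtain k k' where
    kX: "gmult h pX = gscale k (gmult pX h)" and kZ: "gmult h pZ = gscale k' (gmult pZ h)"
    using assms unfolding conjugates_to_def by blast
  have "mat2 b a d c = gmult h pX"
    by (simp add: h gate1_mat2)
  also have "\<dots> = mat2 (k * c) (k * d) (k * a) (k * b)"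
    unfolding kX by (simp add: h gate1_mat2)
  finally have X: "b = k * c" "a = k * d" "d = k * a" "c = k * b"
    unfolding mat2_eq_iff by blast+
  have "mat2 a (- b) c (- d) = gmult h pZ"
    by (simp add: h gate1_mat2)
  also have "\<dots> = mat2 (k' * a) (k' * b) (- (k' * c)) (- (k' * d))"
    unfolding kZ by (simp add: h gate1_mat2)
  finally have Z: "a = k' * a" "- b = k' * b" "c = - (k' * c)" "- d = - (k' * d)"
    unfolding mat2_eq_iff by blast+
  have "(b = 0 \<and> c = 0) \<or> (a = 0 \<and> d = 0)"
  proof (cases "k' = 1")
    case True
    then have "b + b = 0" "c + c = 0"
      using Z(2,3) by (simp_all add: eq_neg_iff_add_eq_0 neg_eq_iff_add_eq_0)
    then show ?thesis by simp
  next
    case False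
    then show ?thesis using Z(1,4) by simp
  qed
  then consider "b = 0" "c = 0" "a = d" | "b = 0" "c = 0" "a = - d"
    | "a = 0" "d = 0" "c = b" | "a = 0" "d = 0" "c = - b"
    using eq_or_eq_neg_if_mutual_multiples[OF X(2,3)] eq_or_eq_neg_if_mutual_multiples[OF X(4,1)] by blast
  then show ?thesis
  proof cases
    case 1
    then have "h = gscale a pI" by (simp add: h gate1_mat2)
    then show ?thesis by blast
  next
    case 2
    then have "h = gscale a pZ" by (simp add: h gate1_mat2)
    then show ?thesis by blast
  next
    case 3
    then have "h = gscale b pX" by (simp add: h gate1_mat2)
    then show ?thesis by blast
  next
    case 4
    then have "h = gscale (\<i> * b) pY" by (simp add: h gate1_mat2 algebra_simps)
    then show ?thesis by blast
  qed
qed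

definition pauli_XZ :: "bool \<Rightarrow> bool \<Rightarrow> gate1" where
  "pauli_XZ x z = gmult (if x then pX else pI) (if z then pZ else pI)"

lemma pauli_XZ_False_False [simp]: "pauli_XZ False False = pI"
  by (simp add: pauli_XZ_def)

lemma pauli_eq_gscale_pauli_XZ:
  assumes "p \<in> {pI, pX, pY, pZ}"
  shows "\<exists>c x z. c \<noteq> 0 \<and> p = gscale c (pauli_XZ x z)"
proof -
  have "pI = gscale 1 (pauli_XZ False False)" "pX = gscale 1 (pauli_XZ True False)"
    "pY = gscale \<i> (pauli_XZ True True)" "pZ = gscale 1 (pauli_XZ False True)"
    by (simp_all add: pauli_XZ_def gate1_mat2)
  then show ?thesis
    using assms by (metis complex_i_not_zero empty_iff insert_iff one_neq_zero)
qed

lemma paulis_conjugates_to_self: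
  assumes "p \<in> {pI, pX, pY, pZ}" and "q \<in> {pI, pX, pY, pZ}"
  shows "conjugates_to q p p"
  unfolding conjugates_to_def
  by (rule exI[of _ "if p = q \<or> p = pI \<or> q = pI then 1 else -1"])
     (use assms in \<open>auto simp: gate1_mat2\<close>)

lemma gate_mat_conjugates_to_pX:
  "conjugates_to (gate_mat v) pX (pauli_XZ (v \<in> {GI, GP, GHP, GPHP}) (v \<in> {GP, GHP, GPH, GH}))"
  unfolding conjugates_to_def
  by (rule exI[of _ "case v of GP \<Rightarrow> \<i> | GHP \<Rightarrow> - \<i> | _ \<Rightarrow> 1"])
     (cases v; simp add: gate1_mat2 pauli_XZ_def algebra_simps inv_sqrt2_square)

lemma gate_mat_conjugates_to_pZ:
  "conjugates_to (gate_mat v) pZ (pauli_XZ (v \<in> {GHP, GPHP, GPH, GH}) (v \<in> {GI, GP, GPH, GPHP}))"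
  unfolding conjugates_to_def
  by (rule exI[of _ "case v of GPHP \<Rightarrow> \<i> | GPH \<Rightarrow> \<i> | _ \<Rightarrow> 1"])
     (cases v; simp add: gate1_mat2 pauli_XZ_def algebra_simps inv_sqrt2_square)

lemma gate_with_pauli_images:
  assumes "x \<or> z" and "x' \<or> z'" and "(x, z) \<noteq> (x', z')"
  shows "\<exists>v. x = (v \<in> {GI, GP, GHP, GPHP}) \<and> z = (v \<in> {GP, GHP, GPH, GH})
           \<and> x' = (v \<in> {GHP, GPHP, GPH, GH}) \<and> z' = (v \<in> {GI, GP, GPH, GPHP})"
  using assms
  by (cases x; cases z; cases x'; cases z')
     (auto intro: exI[of _ GI] exI[of _ GP] exI[of _ GHP] exI[of _ GPHP] exI[of _ GPH] exI[of _ GH])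

lemma conjugates_to_pauli_XZ_if_pauli_image:
  assumes "unitary1 g" and "pauli_up_to_phase (gmult (gmult g P) (gadj g))"
  shows "\<exists>x z. conjugates_to g P (pauli_XZ x z)"
proof -
  obtain s p where "s \<noteq> 0" "p \<in> {pI, pX, pY, pZ}" and sp: "gmult (gmult g P) (gadj g) = gscale s p"
    using assms(2) unfolding pauli_up_to_phase_def by blast
  then obtain c x z where "c \<noteq> 0" and p: "p = gscale c (pauli_XZ x z)"
    using pauli_eq_gscale_pauli_XZ by blast
  have "gmult g P = gmult (gmult (gmult g P) (gadj g)) g"
    using assms(1) unfolding unitary1_def by (simp add: gmult_assoc)
  also have "\<dots> = gscale (s * c) (gmult (pauli_XZ x z) g)"
    by (simp add: sp p gmult_gscale_left gscale_gscale)
  finally show ?thesis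
    unfolding conjugates_to_def using \<open>s \<noteq> 0\<close> \<open>c \<noteq> 0\<close> by (intro exI[of _ "s * c"] exI) simp
qed

lemma clifford1_pauli_images:
  assumes "clifford1 g"
  obtains x z x' z' where "conjugates_to g pX (pauli_XZ x z)" and "conjugates_to g pZ (pauli_XZ x' z')"
    and "x \<or> z" and "x' \<or> z'" and "(x, z) \<noteq> (x', z')"
proof -
  have u: "unitary1 g"
    using assms unfolding clifford1_def by blast
  obtain x z x' z' where X: "conjugates_to g pX (pauli_XZ x z)" and Z: "conjugates_to g pZ (pauli_XZ x' z')"
    using assms conjugates_to_pauli_XZ_if_pauli_image[OF u] unfolding clifford1_def by metis
  have "x \<or> z"
  proof (rule ccontr)
    assume "\<not> (x \<or> z)"
    then have "conjugates_to g pX pI"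
      using X by simp
    then obtain c where "pI = gscale c pX"
      using conjugates_to_same_image[OF u _ conjugates_to_pI] by blast
    then show False by (auto simp: gate1_mat2)
  qed
  moreover have "x' \<or> z'"
  proof (rule ccontr)
    assume "\<not> (x' \<or> z')"
    then have "conjugates_to g pZ pI"
      using Z by simp
    then obtain c where "pI = gscale c pZ"
      using conjugates_to_same_image[OF u _ conjugates_to_pI] by blast
    then show False by (auto simp: gate1_mat2)
  qed
  moreover have "(x, z) \<noteq> (x', z')"
  proof
    assume "(x, z) = (x', z')"
    then obtain c where "pZ = gscale c pX"
      using conjugates_to_same_image[OF u X] Z by auto
    then show False by (auto simp: gate1_mat2)
  qed
  ultimately show thesis
    using that X Z by blast
qed

lemma clifford1_eq_gscale_gate_mat_pauli:
  assumes "clifford1 g"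
  shows "\<exists>v q c. q \<in> {pI, pX, pY, pZ} \<and> cmod c = 1 \<and> g = gscale c (gmult (gate_mat v) q)"
proof -
  obtain x z x' z' where X: "conjugates_to g pX (pauli_XZ x z)" and Z: "conjugates_to g pZ (pauli_XZ x' z')"
    and nondeg: "x \<or> z" "x' \<or> z'" "(x, z) \<noteq> (x', z')"
    using clifford1_pauli_images[OF assms] .
  obtain v where "x = (v \<in> {GI, GP, GHP, GPHP})" "z = (v \<in> {GP, GHP, GPH, GH})"
    "x' = (v \<in> {GHP, GPHP, GPH, GH})" "z' = (v \<in> {GI, GP, GPH, GPHP})"
    using gate_with_pauli_images[OF nondeg] by blast
  then have GX: "conjugates_to (gate_mat v) pX (pauli_XZ x z)"
    and GZ: "conjugates_to (gate_mat v) pZ (pauli_XZ x' z')"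
    using gate_mat_conjugates_to_pX gate_mat_conjugates_to_pZ by simp_all
  define G where "G = gate_mat v"
  have uG: "unitary1 G"
    unfolding G_def by (rule gate_mat_unitary)
  have "conjugates_to (gmult (gadj G) g) pX pX" and "conjugates_to (gmult (gadj G) g) pZ pZ"
    using conjugates_to_gmult[OF conjugates_to_gadj[OF uG] X] GX
      conjugates_to_gmult[OF conjugates_to_gadj[OF uG] Z] GZ
    unfolding G_def by simp_all
  then obtain c q where q: "q \<in> {pI, pX, pY, pZ}" and cq: "gmult (gadj G) g = gscale c q"
    using pauli_if_conjugates_to_self by blast
  have "g = gmult G (gmult (gadj G) g)"
    using uG unfolding unitary1_def by (simp flip: gmult_assoc)
  then have g: "g = gscale c (gmult G q)"
    by (simp add: cq gmult_gscale_right)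
  have "cmod c = 1"
    using unitary1_gscale_imp_cmod[OF unitary1_gmult[OF uG pauli_unitary[OF q]]] assms g
    unfolding clifford1_def by simp
  then show ?thesis
    using g q unfolding G_def by blast
qed

lemma clifford_form_conjugates_to_pX_power:
  assumes "q \<in> {pI, pX, pY, pZ}"
  shows "conjugates_to (gscale c (gmult (gate_mat v) q)) (if a then pX else pI)
           (pauli_XZ (a \<and> v \<in> {GI, GP, GHP, GPHP}) (a \<and> v \<in> {GP, GHP, GPH, GH}))"
  using conjugates_to_gmult[OF gate_mat_conjugates_to_pX paulis_conjugates_to_self[OF _ assms]]
  by (cases a) (simp_all add: conjugates_to_gscale)

lemma clifford_form_conjugates_to_pZ_power:
  assumes "q \<in> {pI, pX, pY, pZ}"
  shows "conjugates_to (gscale c (gmult (gate_mat v) q)) (if b then pZ else pI)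
           (pauli_XZ (b \<and> v \<in> {GHP, GPHP, GPH, GH}) (b \<and> v \<in> {GI, GP, GPH, GPHP}))"
  using conjugates_to_gmult[OF gate_mat_conjugates_to_pZ paulis_conjugates_to_self[OF _ assms]]
  by (cases b) (simp_all add: conjugates_to_gscale)

fun gpow :: "gate1 \<Rightarrow> nat \<Rightarrow> gate1" where
  "gpow g 0 = pI"
| "gpow g (Suc n) = gmult g (gpow g n)"

lemma gpow_gscale: "gpow (gscale c g) n = gscale (c ^ n) (gpow g n)"
  by (induction n) (simp_all add: gmult_gscale_left gmult_gscale_right gscale_gscale mult.commute)

lemma gH_eq_gscale: "gH = gscale inv_sqrt2 (mat2 1 1 1 (-1))"
  by (simp add: gH_mat2)

text \<open>Up to phase, every single-qubit Clifford has order 1, 2, 3 or 4.\<close>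

lemma gpow_12_gate_mat_pauli:
  assumes "q \<in> {pI, pX, pY, pZ}"
  shows "\<exists>s. s \<noteq> 0 \<and> gpow (gmult (gate_mat v) q) 12 = gscale s pI"
proof -
  define N where "N = gpow (gmult (gate_mat v) q) 12"
  have N: "N False True = 0 \<and> N True False = 0 \<and> N True True = N False False \<and> N False False \<noteq> 0"
    unfolding N_def using assms
    by (cases v) (auto simp: gH_eq_gscale pI_mat2 pX_mat2 pY_mat2 pZ_mat2 gP_mat2 gmult_gscale_left
        gmult_gscale_right gpow_gscale numeral_eq_Suc gscale_gscale gscale_apply algebra_simps
        simp del: gscale_mat2)
  then have "N = gscale (N False False) pI"
    by (subst mat2_eta) (simp add: pI_mat2)
  then show ?thesis
    using N unfolding N_def by blast
qed

lemma clifford1_gpow_12: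
  assumes "clifford1 g"
  shows "\<exists>s. s \<noteq> 0 \<and> gpow g 12 = gscale s pI"
proof -
  obtain v q c where q: "q \<in> {pI, pX, pY, pZ}" and "cmod c = 1"
    and g: "g = gscale c (gmult (gate_mat v) q)"
    using clifford1_eq_gscale_gate_mat_pauli[OF assms] by blast
  obtain s where "s \<noteq> 0" and "gpow (gmult (gate_mat v) q) 12 = gscale s pI"
    using gpow_12_gate_mat_pauli[OF q] by blast
  then have "gpow g 12 = gscale (c ^ 12 * s) pI"
    by (simp add: g gpow_gscale gscale_gscale)
  moreover have "c ^ 12 * s \<noteq> 0"
    using \<open>cmod c = 1\<close> \<open>s \<noteq> 0\<close> by auto
  ultimately show ?thesis
    by blast
qed

section \<open>Binary linear codes and their duals\<close>

definition vadd :: "('n \<Rightarrow> bool) \<Rightarrow> ('n \<Rightarrow> bool) \<Rightarrow> 'n \<Rightarrow> bool" where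
  "vadd x y = (\<lambda>i. x i \<noteq> y i)"

definition chi :: "('n::finite \<Rightarrow> bool) \<Rightarrow> ('n \<Rightarrow> bool) \<Rightarrow> complex" where
  "chi u w = (\<Prod>i\<in>UNIV. if u i \<and> w i then -1 else 1)"

lemma vadd_self [simp]: "vadd x x = (\<lambda>_. False)"
  and vadd_vadd_cancel [simp]: "vadd (vadd x y) y = x"
  and vadd_vadd_cancel_left [simp]: "vadd x (vadd x y) = y"
  and vadd_zero_right [simp]: "vadd x (\<lambda>_. False) = x"
  and vadd_eq_right_iff [simp]: "vadd x y = y \<longleftrightarrow> x = (\<lambda>_. False)"
  by (auto simp: vadd_def fun_eq_iff)

lemma vadd_commute: "vadd x y = vadd y x"
  and vadd_assoc: "vadd (vadd x y) z = vadd x (vadd y z)"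
  by (auto simp: vadd_def fun_eq_iff)

lemma lin_code_iff: "lin_code A \<longleftrightarrow> (\<lambda>_. False) \<in> A \<and> (\<forall>a\<in>A. \<forall>b\<in>A. vadd a b \<in> A)"
  unfolding lin_code_def vadd_def ..

lemma lin_code_zero: "lin_code A \<Longrightarrow> (\<lambda>_. False) \<in> A"
  and lin_code_vadd: "lin_code A \<Longrightarrow> a \<in> A \<Longrightarrow> b \<in> A \<Longrightarrow> vadd a b \<in> A"
  unfolding lin_code_iff by blast+

lemma chi_commute: "chi u w = chi w u"
  unfolding chi_def by (intro prod.cong) auto

lemma chi_vadd_left: "chi (vadd x y) w = chi x w * chi y w"
  unfolding chi_def vadd_def by (simp add: prod.distrib[symmetric]) (intro prod.cong, auto)

lemma chi_vadd_right: "chi w (vadd x y) = chi w x * chi w y"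
  using chi_vadd_left chi_commute by metis

lemma chi_zero_right [simp]: "chi w (\<lambda>_. False) = 1"
  unfolding chi_def by simp

lemma chi_eq_power: "chi u w = (-1) ^ card {i. u i \<and> w i}"
proof -
  have "chi u w = (\<Prod>i\<in>UNIV \<inter> {i. u i \<and> w i}. -1) * (\<Prod>i\<in>UNIV \<inter> - {i. u i \<and> w i}. 1)"
    unfolding chi_def by (rule prod.If_cases) simp
  then show ?thesis by simp
qed

lemma chi_eq_1_iff: "chi u w = 1 \<longleftrightarrow> even (card {i. u i \<and> w i})"
  and chi_eq_neg_1_iff: "chi u w = -1 \<longleftrightarrow> odd (card {i. u i \<and> w i})"
  by (cases "even (card {i. u i \<and> w i})"; simp add: chi_eq_power complex_eq_iff)+

lemma dual_code_iff: "b \<in> dual_code A \<longleftrightarrow> (\<forall>a\<in>A. chi a b = 1)"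
  unfolding dual_code_def chi_eq_1_iff by simp

lemma lin_code_dual_code: "lin_code (dual_code A)"
  by (simp add: lin_code_iff dual_code_iff chi_vadd_right)

lemma sum_chi_if_not_orthogonal:
  assumes "lin_code B" and "b0 \<in> B" and "chi x b0 = -1"
  shows "(\<Sum>b\<in>B. chi x b) = 0"
  by (rule sum_involution_eq_0[where h = "vadd b0"])
     (use assms in \<open>auto simp: lin_code_vadd chi_vadd_right complex_eq_iff\<close>)

lemma sum_chi_code:
  assumes "lin_code B"
  shows "(\<Sum>b\<in>B. chi x b) = (if x \<in> dual_code B then of_nat (card B) else 0)"
proof (cases "x \<in> dual_code B")
  case True
  then show ?thesis
    by (simp add: dual_code_iff chi_commute)
next
  case False
  then obtain b0 where "b0 \<in> B" and "chi b0 x \<noteq> 1"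
    unfolding dual_code_iff by blast
  then have "chi x b0 = -1"
    by (simp add: chi_commute chi_eq_1_iff chi_eq_neg_1_iff)
  then show ?thesis
    using False sum_chi_if_not_orthogonal[OF assms \<open>b0 \<in> B\<close>] by simp
qed

lemma sum_chi_UNIV:
  "(\<Sum>x\<in>UNIV. chi x b) = (if b = (\<lambda>_. False) then of_nat (card (UNIV :: ('n \<Rightarrow> bool) set)) else 0)"
  for b :: "'n::finite \<Rightarrow> bool"
proof (cases "b = (\<lambda>_. False)")
  case False
  then obtain j where "b j" by auto
  then have "chi (\<lambda>i. i = j) b = -1"
    unfolding chi_def by (subst prod.remove[of _ j]) auto
  then show ?thesis
    using False sum_chi_if_not_orthogonal[of UNIV "\<lambda>i. i = j" b]
    by (simp add: lin_code_iff chi_commute)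
qed simp

lemma card_mult_card_dual_code:
  fixes B :: "('n::finite \<Rightarrow> bool) set"
  assumes "lin_code B"
  shows "card B * card (dual_code B) = card (UNIV :: ('n \<Rightarrow> bool) set)"
proof -
  have "(of_nat (card B * card (dual_code B)) :: complex) = (\<Sum>x\<in>UNIV. \<Sum>b\<in>B. chi x b)"
    by (simp add: sum_chi_code[OF assms] sum.If_cases mult.commute)
  also have "\<dots> = (\<Sum>b\<in>B. \<Sum>x\<in>UNIV. chi x b)"
    by (rule sum.swap)
  also have "\<dots> = of_nat (card (UNIV :: ('n \<Rightarrow> bool) set))"
    using lin_code_zero[OF assms] by (simp add: sum_chi_UNIV sum.delta')
  finally show ?thesis
    by (simp only: of_nat_eq_iff)
qed

lemma dual_code_dual_code:
  fixes B :: "('n::finite \<Rightarrow> bool) set"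
  assumes "lin_code B"
  shows "dual_code (dual_code B) = B"
proof -
  have "B \<subseteq> dual_code (dual_code B)"
    by (auto simp: dual_code_iff) (metis chi_commute)
  moreover have "card (dual_code (dual_code B)) = card B"
    using card_mult_card_dual_code[OF assms] card_mult_card_dual_code[OF lin_code_dual_code, of B]
      lin_code_zero[OF lin_code_dual_code, of B]
    by (metis card_gt_0_iff finite mult.commute mult_left_cancel not_gr0 empty_iff)
  ultimately show ?thesis
    by (metis card_subset_eq finite)
qed

section \<open>Operators on n qubits\<close>

lemma opmult_tensor:
  fixes f g :: "'n::finite \<Rightarrow> gate1"
  shows "opmult (tensor f) (tensor g) = tensor (\<lambda>i. gmult (f i) (g i))"
proof (intro ext)
  fix x y :: "'n::finite \<Rightarrow> bool"
  have "opmult (tensor f) (tensor g) x y = (\<Sum>z\<in>UNIV. \<Prod>i\<in>UNIV. f i (x i) (z i) * g i (z i) (y i))"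
    unfolding opmult_def tensor_def by (simp add: prod.distrib)
  also have "\<dots> = (\<Prod>i\<in>UNIV. \<Sum>k\<in>UNIV. f i (x i) k * g i k (y i))"
    using prod_sum_PiE[of "UNIV::'n set" "\<lambda>_. UNIV::bool set" "\<lambda>i k. f i (x i) k * g i k (y i)"]
    by simp
  finally show "opmult (tensor f) (tensor g) x y = tensor (\<lambda>i. gmult (f i) (g i)) x y"
    unfolding tensor_def gmult_def .
qed

lemma tensor_gscale: "tensor (\<lambda>i. gscale (c i) (f i)) = (\<lambda>x y. (\<Prod>i\<in>UNIV. c i) * tensor f x y)"
  unfolding tensor_def gscale_def by (simp add: prod.distrib)

lemma apply_op_opmult: "apply_op (opmult M N) \<psi> = apply_op M (apply_op N \<psi>)"
  unfolding apply_op_def opmult_def sum_distrib_left sum_distrib_right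
  by (rule ext, subst sum.swap) (simp add: mult.assoc)

lemma apply_op_scaled: "apply_op (\<lambda>x y. c * M x y) \<psi> = (\<lambda>x. c * apply_op M \<psi> x)"
  unfolding apply_op_def by (simp add: sum_distrib_left algebra_simps)

lemma apply_op_one_entry_per_row:
  assumes "\<And>x y. M x y = (if y = \<sigma> x then m x else 0)"
  shows "apply_op M \<psi> = (\<lambda>x. m x * \<psi> (\<sigma> x))"
proof
  fix x
  have "(\<Sum>y\<in>UNIV. (if y = \<sigma> x then m x else 0) * \<psi> y) = (\<Sum>y\<in>UNIV. if y = \<sigma> x then m x * \<psi> y else 0)"
    by (rule sum.cong) auto
  then show "apply_op M \<psi> x = m x * \<psi> (\<sigma> x)"
    unfolding apply_op_def assms by simp
qed

lemma prod_if_all: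
  "(\<Prod>i\<in>(UNIV :: 'n::finite set). if P i then f i else 0) =
     (if \<forall>i. P i then \<Prod>i\<in>UNIV. f i else (0 :: 'a::comm_semiring_1))"
proof (cases "\<forall>i. P i")
  case False
  then obtain j where "\<not> P j" by blast
  then show ?thesis using False by (intro trans[OF prod_zero]) auto
qed simp

lemma apply_op_tensor_pI: "apply_op (tensor (\<lambda>_. pI)) \<psi> = \<psi>"
  by (subst apply_op_one_entry_per_row[where \<sigma> = id and m = "\<lambda>_. 1"])
     (auto simp: tensor_def pI_def prod_if_all fun_eq_iff)

lemma apply_op_pow_gate_pX:
  fixes a :: "'n::finite \<Rightarrow> bool"
  shows "apply_op (pow_gate pX a) \<psi> = (\<lambda>x. \<psi> (vadd x a))"
proof (rule apply_op_one_entry_per_row[where m = "\<lambda>_. 1", simplified])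
  fix x y :: "'n \<Rightarrow> bool"
  have "pow_gate pX a x y = (\<Prod>i\<in>UNIV. if y i = (x i \<noteq> a i) then 1 else 0)"
    unfolding pow_gate_def tensor_def by (intro prod.cong) (auto simp: pX_def pI_def)
  then show "pow_gate pX a x y = (if y = vadd x a then 1 else 0)"
    by (simp add: prod_if_all fun_eq_iff vadd_def)
qed

lemma apply_op_pow_gate_pZ:
  fixes b :: "'n::finite \<Rightarrow> bool"
  shows "apply_op (pow_gate pZ b) \<psi> = (\<lambda>x. chi b x * \<psi> x)"
proof (rule apply_op_one_entry_per_row[where \<sigma> = id, simplified])
  fix x y :: "'n \<Rightarrow> bool"
  have "pow_gate pZ b x y = (\<Prod>i\<in>UNIV. if y i = x i then (if b i \<and> x i then -1 else 1) else 0)"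
    unfolding pow_gate_def tensor_def by (intro prod.cong) (auto simp: pZ_def pI_def)
  then show "pow_gate pZ b x y = (if y = x then chi b x else 0)"
    by (simp add: prod_if_all fun_eq_iff chi_def)
qed

lemma tensor_pauli_XZ: "tensor (\<lambda>i. pauli_XZ (x i) (z i)) = opmult (pow_gate pX x) (pow_gate pZ z)"
  unfolding pow_gate_def opmult_tensor pauli_XZ_def by simp

lemma apply_op_scaled_state: "apply_op M (\<lambda>x. c * \<psi> x) = (\<lambda>x. c * apply_op M \<psi> x)"
  unfolding apply_op_def by (simp add: sum_distrib_left algebra_simps)

lemma apply_op_tensor_funpow:
  "(apply_op (tensor g) ^^ n) \<psi> = apply_op (tensor (\<lambda>i. gpow (g i) n)) \<psi>"
  by (induction n) (simp_all add: apply_op_tensor_pI opmult_tensor flip: apply_op_opmult)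

section \<open>Logical operators of CSS codes\<close>

lemma css_codespace_iff:
  "\<psi> \<in> css_codespace A B \<longleftrightarrow>
     (\<forall>a\<in>A. \<forall>x. \<psi> (vadd x a) = \<psi> x) \<and> (\<forall>b\<in>B. \<forall>x. chi b x * \<psi> x = \<psi> x)"
  unfolding css_codespace_def apply_op_pow_gate_pX apply_op_pow_gate_pZ by (simp add: fun_eq_iff)

lemma css_codespace_scaled: "\<psi> \<in> css_codespace A B \<Longrightarrow> (\<lambda>x. s * \<psi> x) \<in> css_codespace A B"
  unfolding css_codespace_iff by (simp add: algebra_simps)

definition coset_state :: "('n \<Rightarrow> bool) set \<Rightarrow> ('n \<Rightarrow> bool) \<Rightarrow> ('n \<Rightarrow> bool) \<Rightarrow> complex" where
  "coset_state A y = (\<lambda>x. if vadd x y \<in> A then 1 else 0)"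

lemma coset_state_in_css_codespace:
  assumes A: "lin_code A" and BA: "B \<subseteq> dual_code A" and y: "y \<in> dual_code B"
  shows "coset_state A y \<in> css_codespace A B"
  unfolding css_codespace_iff
proof (intro conjI ballI allI)
  fix a x assume "a \<in> A"
  then have "vadd (vadd x a) y \<in> A \<longleftrightarrow> vadd x y \<in> A"
    using lin_code_vadd[OF A, of _ a] by (metis vadd_assoc vadd_commute vadd_vadd_cancel)
  then show "coset_state A y (vadd x a) = coset_state A y x"
    unfolding coset_state_def by simp
next
  fix b x assume "b \<in> B"
  have "chi b x = 1" if "vadd x y \<in> A"
  proof -
    have "b \<in> dual_code A"
      using BA \<open>b \<in> B\<close> by blast
    then have "chi (vadd x y) b = 1"
      using that by (simp add: dual_code_iff)
    moreover have "chi b y = 1"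
      using y \<open>b \<in> B\<close> by (simp add: dual_code_iff)
    ultimately show ?thesis
      by (metis chi_commute chi_vadd_right mult_1 vadd_vadd_cancel)
  qed
  then show "chi b x * coset_state A y x = coset_state A y x"
    unfolding coset_state_def by simp
qed

lemma pauli_fixing_css_codespace_in_codes:
  fixes A B :: "('n::finite \<Rightarrow> bool) set"
  assumes A: "lin_code A" and B: "lin_code B" and BA: "B \<subseteq> dual_code A"
    and fixes_code: "\<And>\<phi>. \<phi> \<in> css_codespace A B \<Longrightarrow>
      (\<lambda>y. K * apply_op (pow_gate pX x) (apply_op (pow_gate pZ z) \<phi>) y) = \<phi>"
  shows "x \<in> A \<and> z \<in> B"
proof -
  have fixed: "K * chi z (vadd y x) * \<phi> (vadd y x) = \<phi> y" if "\<phi> \<in> css_codespace A B" for \<phi> y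
    using fun_cong[OF fixes_code[OF that], of y]
    by (simp add: apply_op_pow_gate_pX apply_op_pow_gate_pZ mult.assoc)
  have on_coset: "x \<in> A \<and> K * chi z (vadd y x) = 1" if "y \<in> dual_code B" for y
  proof -
    have "K * chi z (vadd y x) * coset_state A y (vadd y x) = 1"
      using fixed[OF coset_state_in_css_codespace[OF A BA that], of y] lin_code_zero[OF A]
      by (simp add: coset_state_def)
    moreover have "vadd (vadd y x) y = x"
      by (metis vadd_commute vadd_vadd_cancel)
    ultimately show ?thesis
      by (auto simp: coset_state_def split: if_splits)
  qed
  then have "x \<in> A" and K: "K * chi z x = 1"
    using lin_code_zero[OF lin_code_dual_code] by (metis vadd_commute vadd_zero_right)+
  have "chi y z = 1" if "y \<in> dual_code B" for y
  proof -
    have "1 = K * chi z (vadd y x)"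
      using on_coset[OF that] by simp
    also have "\<dots> = chi z y * (K * chi z x)"
      by (simp add: chi_vadd_right)
    finally show ?thesis
      using K by (simp add: chi_commute)
  qed
  then have "z \<in> B"
    using dual_code_dual_code[OF B] by (auto simp: dual_code_iff)
  with \<open>x \<in> A\<close> show ?thesis ..
qed

lemma logical_tensor_clifford_onto_codespace:
  assumes cl: "\<And>i. clifford1 (g i)" and logical: "logical_op (css_codespace A B) (tensor g)"
    and \<phi>: "\<phi> \<in> css_codespace A B"
  shows "\<exists>\<psi>\<in>css_codespace A B. apply_op (tensor g) \<psi> = \<phi>"
proof -
  let ?U = "apply_op (tensor g)"
  obtain s where "\<And>i. s i \<noteq> 0" and s: "\<And>i. gpow (g i) 12 = gscale (s i) pI"
    using clifford1_gpow_12[OF cl] by metis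
  define S where "S = (\<Prod>i\<in>UNIV. s i)"
  have "S \<noteq> 0"
    unfolding S_def using \<open>\<And>i. s i \<noteq> 0\<close> by simp
  have "?U ((?U ^^ 11) \<phi>) = (?U ^^ 12) \<phi>"
    by (simp add: eval_nat_numeral)
  also have "\<dots> = apply_op (tensor (\<lambda>i. gpow (g i) 12)) \<phi>"
    by (rule apply_op_tensor_funpow)
  also have "\<dots> = (\<lambda>x. S * \<phi> x)"
    by (simp add: s tensor_gscale apply_op_scaled apply_op_tensor_pI S_def)
  finally have U12: "?U ((?U ^^ 11) \<phi>) = (\<lambda>x. S * \<phi> x)" .
  have "(?U ^^ n) \<phi> \<in> css_codespace A B" for n
    by (induction n) (use logical \<phi> in \<open>auto simp: logical_op_def\<close>)
  then have "(\<lambda>x. (1 / S) * (?U ^^ 11) \<phi> x) \<in> css_codespace A B"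
    by (rule css_codespace_scaled)
  moreover have "?U (\<lambda>x. (1 / S) * (?U ^^ 11) \<phi> x) = \<phi>"
    unfolding apply_op_scaled_state U12 using \<open>S \<noteq> 0\<close> by simp
  ultimately show ?thesis
    by blast
qed

lemma logical_conjugate_of_stabilizer_in_codes:
  fixes A B :: "('n::finite \<Rightarrow> bool) set"
  assumes A: "lin_code A" and B: "lin_code B" and BA: "B \<subseteq> dual_code A"
    and cl: "\<And>i. clifford1 (g i)" and logical: "logical_op (css_codespace A B) (tensor g)"
    and stabilizer: "\<And>\<psi>. \<psi> \<in> css_codespace A B \<Longrightarrow> apply_op (tensor m) \<psi> = \<psi>"
    and conj: "\<And>i. conjugates_to (g i) (m i) (pauli_XZ (x i) (z i))"
  shows "x \<in> A \<and> z \<in> B"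
proof -
  obtain k where k: "\<And>i. gmult (g i) (m i) = gscale (k i) (gmult (pauli_XZ (x i) (z i)) (g i))"
    using conj unfolding conjugates_to_def by metis
  have commute: "apply_op (tensor g) (apply_op (tensor m) \<psi>) =
      (\<lambda>y. (\<Prod>i\<in>UNIV. k i) * apply_op (pow_gate pX x) (apply_op (pow_gate pZ z) (apply_op (tensor g) \<psi>)) y)"
    for \<psi>
  proof -
    have "apply_op (tensor g) (apply_op (tensor m) \<psi>) =
        apply_op (tensor (\<lambda>i. gscale (k i) (gmult (pauli_XZ (x i) (z i)) (g i)))) \<psi>"
      by (simp add: opmult_tensor k flip: apply_op_opmult)
    also have "\<dots> = (\<lambda>y. (\<Prod>i\<in>UNIV. k i) *
        apply_op (opmult (tensor (\<lambda>i. pauli_XZ (x i) (z i))) (tensor g)) \<psi> y)"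
      by (simp only: tensor_gscale apply_op_scaled opmult_tensor)
    finally show ?thesis
      by (simp only: tensor_pauli_XZ apply_op_opmult)
  qed
  show ?thesis
  proof (rule pauli_fixing_css_codespace_in_codes[OF A B BA])
    fix \<phi> assume "\<phi> \<in> css_codespace A B"
    then obtain \<psi> where "\<psi> \<in> css_codespace A B" and \<phi>: "\<phi> = apply_op (tensor g) \<psi>"
      using logical_tensor_clifford_onto_codespace[OF cl logical] by metis
    then show "(\<lambda>y. (\<Prod>i\<in>UNIV. k i) * apply_op (pow_gate pX x) (apply_op (pow_gate pZ z) \<phi>) y) = \<phi>"
      using commute[of \<psi>] stabilizer by simp
  qed
qed

lemma logical_clifford_X_stabilizer_conditions:
  fixes A B :: "('n::finite \<Rightarrow> bool) set"
  assumes A: "lin_code A" and B: "lin_code B" and BA: "B \<subseteq> dual_code A"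
    and cl: "\<And>i. clifford1 (g i)" and logical: "logical_op (css_codespace A B) (tensor g)"
    and g: "\<And>i. g i = gscale (c i) (gmult (gate_mat (V i)) (q i))" and q: "\<And>i. q i \<in> {pI, pX, pY, pZ}"
    and "a \<in> A"
  shows "cap a (Vset V {GP, GHP, GPH, GH}) \<in> B \<and> cap a (Vset V {GPH, GH}) \<in> A"
proof -
  have "(\<lambda>i. a i \<and> V i \<in> {GI, GP, GHP, GPHP}) \<in> A \<and> (\<lambda>i. a i \<and> V i \<in> {GP, GHP, GPH, GH}) \<in> B"
  proof (rule logical_conjugate_of_stabilizer_in_codes[OF A B BA cl logical])
    show "apply_op (tensor (\<lambda>i. if a i then pX else pI)) \<psi> = \<psi>" if "\<psi> \<in> css_codespace A B" for \<psi>
      using that \<open>a \<in> A\<close> unfolding css_codespace_def pow_gate_def by blast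
    show "conjugates_to (g i) (if a i then pX else pI)
        (pauli_XZ (a i \<and> V i \<in> {GI, GP, GHP, GPHP}) (a i \<and> V i \<in> {GP, GHP, GPH, GH}))" for i
      unfolding g by (rule clifford_form_conjugates_to_pX_power[OF q])
  qed
  moreover have "cap a (Vset V {GPH, GH}) = vadd a (\<lambda>i. a i \<and> V i \<in> {GI, GP, GHP, GPHP})"
  proof
    fix i
    show "cap a (Vset V {GPH, GH}) i = vadd a (\<lambda>i. a i \<and> V i \<in> {GI, GP, GHP, GPHP}) i"
      by (cases "V i") (simp_all add: cap_def Vset_def vadd_def)
  qed
  ultimately show ?thesis
    using lin_code_vadd[OF A \<open>a \<in> A\<close>] by (simp add: cap_def Vset_def)
qed

lemma logical_clifford_Z_stabilizer_conditions:
  fixes A B :: "('n::finite \<Rightarrow> bool) set"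
  assumes A: "lin_code A" and B: "lin_code B" and BA: "B \<subseteq> dual_code A"
    and cl: "\<And>i. clifford1 (g i)" and logical: "logical_op (css_codespace A B) (tensor g)"
    and g: "\<And>i. g i = gscale (c i) (gmult (gate_mat (V i)) (q i))" and q: "\<And>i. q i \<in> {pI, pX, pY, pZ}"
    and "b \<in> B"
  shows "cap b (Vset V {GHP, GPHP, GPH, GH}) \<in> A \<and> cap b (Vset V {GHP, GH}) \<in> B"
proof -
  have "(\<lambda>i. b i \<and> V i \<in> {GHP, GPHP, GPH, GH}) \<in> A \<and> (\<lambda>i. b i \<and> V i \<in> {GI, GP, GPH, GPHP}) \<in> B"
  proof (rule logical_conjugate_of_stabilizer_in_codes[OF A B BA cl logical])
    show "apply_op (tensor (\<lambda>i. if b i then pZ else pI)) \<psi> = \<psi>" if "\<psi> \<in> css_codespace A B" for \<psi>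
      using that \<open>b \<in> B\<close> unfolding css_codespace_def pow_gate_def by blast
    show "conjugates_to (g i) (if b i then pZ else pI)
        (pauli_XZ (b i \<and> V i \<in> {GHP, GPHP, GPH, GH}) (b i \<and> V i \<in> {GI, GP, GPH, GPHP}))" for i
      unfolding g by (rule clifford_form_conjugates_to_pZ_power[OF q])
  qed
  moreover have "cap b (Vset V {GHP, GH}) = vadd b (\<lambda>i. b i \<and> V i \<in> {GI, GP, GPH, GPHP})"
  proof
    fix i
    show "cap b (Vset V {GHP, GH}) i = vadd b (\<lambda>i. b i \<and> V i \<in> {GI, GP, GPH, GPHP}) i"
      by (cases "V i") (simp_all add: cap_def Vset_def vadd_def)
  qed
  ultimately show ?thesis
    using lin_code_vadd[OF B \<open>b \<in> B\<close>] by (simp add: cap_def Vset_def)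
qed

theorem proposition6:
  fixes A B :: "('n::finite \<Rightarrow> bool) set" and U :: "'n qop"
  assumes "lin_code A" and "lin_code B" and "B \<subseteq> dual_code A"
    and "one_local_clifford U"
    and "logical_op (css_codespace A B) U"
  shows "\<exists>(V :: 'n \<Rightarrow> gate) Q c. pauli_circuit Q \<and> cmod c = 1
           \<and> U = (\<lambda>x y. c * opmult (gate_circuit V) Q x y)
           \<and> (\<forall>a\<in>A. cap a (Vset V {GP, GHP, GPH, GH}) \<in> B
                    \<and> cap a (Vset V {GPH, GH}) \<in> A)
           \<and> (\<forall>b\<in>B. cap b (Vset V {GHP, GPHP, GPH, GH}) \<in> A
                    \<and> cap b (Vset V {GHP, GH}) \<in> B)"
proof -
  obtain g where cl: "\<And>i. clifford1 (g i)" and U: "U = tensor g"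
    using assms(4) unfolding one_local_clifford_def by blast
  obtain V q c where q: "\<And>i. q i \<in> {pI, pX, pY, pZ}" and c: "\<And>i. cmod (c i) = 1"
    and g: "\<And>i. g i = gscale (c i) (gmult (gate_mat (V i)) (q i))"
    using clifford1_eq_gscale_gate_mat_pauli[OF cl] by metis
  have "U = (\<lambda>x y. (\<Prod>i\<in>UNIV. c i) * opmult (gate_circuit V) (tensor q) x y)"
    unfolding U gate_circuit_def opmult_tensor g[abs_def] tensor_gscale ..
  moreover have "pauli_circuit (tensor q)"
    unfolding pauli_circuit_def using q by blast
  moreover have "cmod (\<Prod>i\<in>UNIV. c i) = 1"
    by (simp add: prod_norm[symmetric] c)
  ultimately show ?thesis
    using logical_clifford_X_stabilizer_conditions[OF assms(1-3) cl assms(5)[unfolded U] g q]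
      logical_clifford_Z_stabilizer_conditions[OF assms(1-3) cl assms(5)[unfolded U] g q]
    by blast
qed

end
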